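(* Let $F(V)$ be the set of formulas of $\mathrm{q}\L^{*}$, $\sim$ the relation $p\sim q$ iff $\vdash p\leftrightarrow q$, and $[p]_\sim$ the class of $p$. On $[F(V)]_\sim$ define $-[p]_\sim:=[\neg p]_\sim$, $[p]_\sim\oplus[q]_\sim:=[\neg p\to q]_\sim$, $[0]_\sim:=[p\to p]_\sim$ (for any $p$), and let $[1]_\sim$ be the class of the constant $1$. Then $\langle [F(V)]_\sim;\oplus,-,[0]_\sim,[1]_\sim\rangle$ is an MV*-algebra.
   Context: Let $V=\{p_1,p_2,\ldots\}$ be a set of propositional variables and $F(V)$ the set of formulas built from $V$ and the constant $1$ with the binary connective $\to$ and the unary connectives $\neg$, ${}^{+}$, ${}^{-}$ (postfix ${}^+,{}^-$ bind tighter than $\neg$, which binds tighter than $\to$). Abbreviations: $p\vee q:=((p^{+}\to q^{+})^{+}\to(\neg p)^{-})\to((q^{-}\to p^{-})^{-}\to p^{-})$; an axiom written $A\leftrightarrow B$ stands for the two axioms $A\to B$ and $B\to A$, and $\vdash A\leftrightarrow B$ means $\vdash A\to B$ and $\vdash B\to A$. Axiom schemas of $\mathrm{q}\L^{*}$ (for all formulas $p,q,r$): (Q1) $(p\to q)\leftrightarrow(\neg q\to\neg p)$; (Q2) $1\leftrightarrow((1\to p)\to 1)$; (Q3) $p\leftrightarrow((q\to q)\to p)$; (Q4) $(p\to q)\leftrightarrow((q^{+}\to p^{-})\to(p^{+}\to q^{-}))$; (Q5) $\neg(p\to q)\leftrightarrow(q\to p)$; (Q6) $(p\to(\neg p\to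 q))^{+}\leftrightarrow(p^{+}\to(\neg p^{+}\to q^{+}))$; (Q7) $(p\to(q\vee r))\leftrightarrow((p\to r)\vee(p\to q))$; (Q8) $(p\vee(q\vee r))\leftrightarrow((p\vee q)\vee r)$; (Q9) $((p\to 1)\to((q\to 1)\to r))\to((q\to 1)\to((p\to 1)\to r))$; (Q10) $p\to 1$; (Q11) $((1\to 1)\to p^{+})\leftrightarrow((p\to 1)\to 1)$ and $((1\to 1)\to p^{-})\leftrightarrow((p\to\neg 1)\to\neg 1)$. Deduction rules: (R1) from $p$ and $p\to q$ infer $(r\to r)\to q$; (R2) from $(r\to r)\to(p\to q)$ infer $p\to q$; (R3) from $p\to q$ and $r\to t$ infer $(q\to r)\to(p\to t)$. $\vdash q$ means $q$ is derivable from the axioms by the rules. ($\sim$ is a congruence, so the operations are well defined.) An MV*-algebra is an algebra $\langle B;\oplus,-,0,1\rangle$ of type $\langle2,1,0,0\rangle$ such that for all $x,y,z\in B$: (MV*1) $x\oplus y=y\oplus x$; (MV*2) $(1\oplus x)\oplus(y\oplus(1\oplus z))=((1\oplus x)\oplus y)\oplus(1\oplus z)$; (MV*3) $x\oplus(-x)=0$; (MV*4) $(x\oplus 1)\oplus 1=1$; (MV*5) $x\oplus 0=x$; (MV*6) $-(x\oplus y)=(-x)\oplus(-y)$; (MV*7) $-(-x)=x$; (MV*8) $x\oplus y=(x^{+}\oplus y^{+})\oplus(x^{-}\oplus y^{-})$; (MV*9) $(-x\oplus(x\oplus y))^{+}=-(x^{+})\oplus(x^{+}\oplus y^{+})$;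 (MV*10) $x\vee y=y\vee x$; (MV*11) $x\vee(y\vee z)=(x\vee y)\vee z$; (MV*12) $x\oplus(y\vee z)=(x\oplus y)\vee(x\oplus z)$; where $x^{+}:=1\oplus(-1\oplus x)$, $x^{-}:=-1\oplus(1\oplus x)$ and $x\vee y:=(x^{+}\oplus(-x^{+}\oplus y^{+})^{+})\oplus(x^{-}\oplus(-x^{-}\oplus y^{-})^{+})$. *)

theory Defs
  imports Main
begin

datatype fm = Var nat | One | Imp fm fm | Neg fm | Pos fm | Ngt fm

definition Or :: "fm \<Rightarrow> fm \<Rightarrow> fm" where
  "Or p q = Imp (Imp (Pos (Imp (Pos p) (Pos q))) (Ngt (Neg p)))
                (Imp (Ngt (Imp (Ngt q) (Ngt p))) (Ngt p))"

inductive derivable :: "fm \<Rightarrow> bool" where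
  Q1a: "derivable (Imp (Imp p q) (Imp (Neg q) (Neg p)))"
| Q1b: "derivable (Imp (Imp (Neg q) (Neg p)) (Imp p q))"
| Q2a: "derivable (Imp One (Imp (Imp One p) One))"
| Q2b: "derivable (Imp (Imp (Imp One p) One) One)"
| Q3a: "derivable (Imp p (Imp (Imp q q) p))"
| Q3b: "derivable (Imp (Imp (Imp q q) p) p)"
| Q4a: "derivable (Imp (Imp p q) (Imp (Imp (Pos q) (Ngt p)) (Imp (Pos p) (Ngt q))))"
| Q4b: "derivable (Imp (Imp (Imp (Pos q) (Ngt p)) (Imp (Pos p) (Ngt q))) (Imp p q))"
| Q5a: "derivable (Imp (Neg (Imp p q)) (Imp q p))"
| Q5b: "derivable (Imp (Imp q p) (Neg (Imp p q)))"
| Q6a: "derivable (Imp (Pos (Imp p (Imp (Neg p) q))) (Imp (Pos p) (Imp (Neg (Pos p)) (Pos q))))"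
| Q6b: "derivable (Imp (Imp (Pos p) (Imp (Neg (Pos p)) (Pos q))) (Pos (Imp p (Imp (Neg p) q))))"
| Q7a: "derivable (Imp (Imp p (Or q r)) (Or (Imp p r) (Imp p q)))"
| Q7b: "derivable (Imp (Or (Imp p r) (Imp p q)) (Imp p (Or q r)))"
| Q8a: "derivable (Imp (Or p (Or q r)) (Or (Or p q) r))"
| Q8b: "derivable (Imp (Or (Or p q) r) (Or p (Or q r)))"
| Q9: "derivable (Imp (Imp (Imp p One) (Imp (Imp q One) r)) (Imp (Imp q One) (Imp (Imp p One) r)))"
| Q10: "derivable (Imp p One)"
| Q11a: "derivable (Imp (Imp (Imp One One) (Pos p)) (Imp (Imp p One) One))"
| Q11b: "derivable (Imp (Imp (Imp p One) One) (Imp (Imp One One) (Pos p)))"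
| Q11c: "derivable (Imp (Imp (Imp One One) (Ngt p)) (Imp (Imp p (Neg One)) (Neg One)))"
| Q11d: "derivable (Imp (Imp (Imp p (Neg One)) (Neg One)) (Imp (Imp One One) (Ngt p)))"
| R1: "derivable p \<Longrightarrow> derivable (Imp p q) \<Longrightarrow> derivable (Imp (Imp r r) q)"
| R2: "derivable (Imp (Imp r r) (Imp p q)) \<Longrightarrow> derivable (Imp p q)"
| R3: "derivable (Imp p q) \<Longrightarrow> derivable (Imp r t) \<Longrightarrow> derivable (Imp (Imp q r) (Imp p t))"

definition fm_equiv :: "fm \<Rightarrow> fm \<Rightarrow> bool" where
  "fm_equiv p q \<longleftrightarrow> derivable (Imp p q) \<and> derivable (Imp q p)"

definition equiv_rel :: "(fm \<times> fm) set" where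
  "equiv_rel = {(p, q). fm_equiv p q}"

definition cls :: "fm \<Rightarrow> fm set" where
  "cls p = equiv_rel `` {p}"

definition Lcarrier :: "fm set set" where
  "Lcarrier = UNIV // equiv_rel"

definition rep :: "fm set \<Rightarrow> fm" where
  "rep X = (SOME p. p \<in> X)"

definition Lneg :: "fm set \<Rightarrow> fm set" where
  "Lneg X = cls (Neg (rep X))"

definition Lplus :: "fm set \<Rightarrow> fm set \<Rightarrow> fm set" where
  "Lplus X Y = cls (Imp (Neg (rep X)) (rep Y))"

definition Lzero :: "fm set" where
  "Lzero = cls (Imp One One)"

definition Lone :: "fm set" where
  "Lone = cls One"

definition mv_pos :: "('a \<Rightarrow> 'a \<Rightarrow> 'a) \<Rightarrow> ('a \<Rightarrow> 'a) \<Rightarrow> 'a \<Rightarrow> 'a \<Rightarrow> 'a" where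
  "mv_pos pl ng o1 x = pl o1 (pl (ng o1) x)"

definition mv_ngt :: "('a \<Rightarrow> 'a \<Rightarrow> 'a) \<Rightarrow> ('a \<Rightarrow> 'a) \<Rightarrow> 'a \<Rightarrow> 'a \<Rightarrow> 'a" where
  "mv_ngt pl ng o1 x = pl (ng o1) (pl o1 x)"

definition mv_join :: "('a \<Rightarrow> 'a \<Rightarrow> 'a) \<Rightarrow> ('a \<Rightarrow> 'a) \<Rightarrow> 'a \<Rightarrow> 'a \<Rightarrow> 'a \<Rightarrow> 'a" where
  "mv_join pl ng o1 x y =
     (let xp = mv_pos pl ng o1 x; yp = mv_pos pl ng o1 y;
          xm = mv_ngt pl ng o1 x; ym = mv_ngt pl ng o1 y
      in pl (pl xp (mv_pos pl ng o1 (pl (ng xp) yp)))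
            (pl xm (mv_pos pl ng o1 (pl (ng xm) ym))))"

definition mv_star_algebra ::
  "'a set \<Rightarrow> ('a \<Rightarrow> 'a \<Rightarrow> 'a) \<Rightarrow> ('a \<Rightarrow> 'a) \<Rightarrow> 'a \<Rightarrow> 'a \<Rightarrow> bool" where
  "mv_star_algebra B pl ng z o1 \<longleftrightarrow>
     z \<in> B \<and> o1 \<in> B \<and>
     (\<forall>x\<in>B. \<forall>y\<in>B. pl x y \<in> B) \<and> (\<forall>x\<in>B. ng x \<in> B) \<and>
     (\<forall>x\<in>B. \<forall>y\<in>B. \<forall>zz\<in>B.
        pl x y = pl y x \<and>
        pl (pl o1 x) (pl y (pl o1 zz)) = pl (pl (pl o1 x) y) (pl o1 zz) \<and>
        pl x (ng x) = z \<and>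
        pl (pl x o1) o1 = o1 \<and>
        pl x z = x \<and>
        ng (pl x y) = pl (ng x) (ng y) \<and>
        ng (ng x) = x \<and>
        pl x y = pl (pl (mv_pos pl ng o1 x) (mv_pos pl ng o1 y))
                    (pl (mv_ngt pl ng o1 x) (mv_ngt pl ng o1 y)) \<and>
        mv_pos pl ng o1 (pl (ng x) (pl x y)) =
          pl (ng (mv_pos pl ng o1 x)) (pl (mv_pos pl ng o1 x) (mv_pos pl ng o1 y)) \<and>
        mv_join pl ng o1 x y = mv_join pl ng o1 y x \<and>
        mv_join pl ng o1 x (mv_join pl ng o1 y zz) = mv_join pl ng o1 (mv_join pl ng o1 x y) zz \<and>
        pl x (mv_join pl ng o1 y zz) = mv_join pl ng o1 (pl x y) (pl x zz))"

end

theory Submission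
  imports Defs
begin

(* Provable equivalence is a congruence, so in the Lindenbaum algebra every axiom pair
   A <-> B of qL* becomes an identity A = B. These identities alone force the MV*-axioms for
   x + y := -x -> y: contraposition with (x -> x) -> y = y gives --x = x and commutativity,
   Q9 gives the restricted associativity, Q4 the decomposition into positive and negative
   parts, Q6 axiom MV*9 and Q7, Q8 the lattice axioms. The map sending an element of the
   quotient type to its equivalence class is a homomorphism onto the carrier of the
   statement, and homomorphic images of MV*-algebras are MV*-algebras. *)

definition ql_join ::
    "('a \<Rightarrow> 'a \<Rightarrow> 'a) \<Rightarrow> ('a \<Rightarrow> 'a) \<Rightarrow> ('a \<Rightarrow> 'a) \<Rightarrow> ('a \<Rightarrow> 'a) \<Rightarrow> 'a \<Rightarrow> 'a \<Rightarrow> 'a"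
  where "ql_join imp neg pos ngt x y =
    imp (imp (pos (imp (pos x) (pos y))) (ngt (neg x))) (imp (ngt (imp (ngt y) (ngt x))) (ngt x))"

(* The axiom pairs Q1-Q9 and Q11 of qL* read as identities, together with
   the derivable equivalence of all formulas p -> p. *)
locale ql_star_algebra =
  fixes imp :: "'a \<Rightarrow> 'a \<Rightarrow> 'a" and neg pos ngt :: "'a \<Rightarrow> 'a" and one :: 'a
  assumes imp_self: "imp x x = imp y y"
    and contrapos: "imp x y = imp (neg y) (neg x)"
    and imp_imp_one_one: "imp (imp one x) one = one"
    and imp_self_left: "imp (imp y y) x = x"
    and imp_pos_ngt: "imp x y = imp (imp (pos y) (ngt x)) (imp (pos x) (ngt y))"
    and neg_imp: "neg (imp x y) = imp y x"
    and pos_imp_neg: "pos (imp x (imp (neg x) y)) = imp (pos x) (imp (neg (pos x)) (pos y))"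
    and imp_join: "imp x (ql_join imp neg pos ngt y z) =
      ql_join imp neg pos ngt (imp x z) (imp x y)"
    and join_assoc: "ql_join imp neg pos ngt x (ql_join imp neg pos ngt y z) =
      ql_join imp neg pos ngt (ql_join imp neg pos ngt x y) z"
    and imp_one_exchange:
      "imp (imp x one) (imp (imp y one) z) = imp (imp y one) (imp (imp x one) z)"
    and pos_eq: "pos x = imp (imp x one) one"
    and ngt_eq: "ngt x = imp (imp x (neg one)) (neg one)"
begin

abbreviation join :: "'a \<Rightarrow> 'a \<Rightarrow> 'a" where "join \<equiv> ql_join imp neg pos ngt"

definition zero :: 'a where "zero = imp one one"

definition oplus :: "'a \<Rightarrow> 'a \<Rightarrow> 'a" where "oplus x y = imp (neg x) y"

lemma imp_self_zero: "imp x x = zero"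
  unfolding zero_def by (rule imp_self)

lemma neg_zero: "neg zero = zero"
  unfolding zero_def by (rule neg_imp)

lemma imp_zero_left: "imp zero x = x"
  by (metis imp_self_left imp_self_zero)

lemma imp_zero_right: "imp x zero = neg x"
  by (metis contrapos neg_zero imp_zero_left)

lemma neg_neg: "neg (neg x) = x"
  by (metis imp_zero_right neg_imp imp_zero_left)

lemma imp_neg_commute: "imp (neg x) y = imp (neg y) x"
  by (metis contrapos neg_neg)

lemma pos_eq_imp: "pos x = imp (neg one) (imp one x)"
  by (metis pos_eq contrapos neg_imp)

lemma ngt_eq_imp: "ngt x = imp one (imp (neg one) x)"
  by (metis ngt_eq contrapos neg_imp neg_neg)

lemma ngt_neg: "ngt (neg x) = neg (pos x)"
  by (metis pos_eq_imp ngt_eq_imp neg_imp contrapos neg_neg)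

lemma pos_neg: "pos (neg x) = neg (ngt x)"
  by (metis ngt_neg neg_neg)

lemma mv_pos_oplus: "mv_pos oplus neg one x = pos x"
  unfolding mv_pos_def oplus_def pos_eq_imp neg_neg ..

lemma mv_ngt_oplus: "mv_ngt oplus neg one x = ngt x"
  unfolding mv_ngt_def oplus_def ngt_eq_imp neg_neg ..

lemma mv_join_oplus: "mv_join oplus neg one x y = join x y"
proof -
  have "join x y =
      imp (imp (pos (imp (pos x) (pos y))) (neg (pos x))) (imp (ngt (imp (ngt y) (ngt x))) (ngt x))"
    unfolding ql_join_def ngt_neg ..
  also have "\<dots> = oplus (oplus (pos x) (pos (oplus (neg (pos x)) (pos y))))
                     (oplus (ngt x) (pos (oplus (neg (ngt x)) (ngt y))))"
    unfolding oplus_def by (metis neg_imp neg_neg imp_neg_commute pos_neg)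
  finally show ?thesis unfolding mv_join_def mv_pos_oplus mv_ngt_oplus Let_def by simp
qed

lemma oplus_commute: "oplus x y = oplus y x"
  unfolding oplus_def by (rule imp_neg_commute)

lemma neg_oplus: "neg (oplus x y) = oplus (neg x) (neg y)"
  unfolding oplus_def by (metis neg_imp contrapos)

lemma oplus_neg_self: "oplus x (neg x) = zero"
  unfolding oplus_def by (rule imp_self_zero)

lemma oplus_one_one: "oplus (oplus x one) one = one"
  unfolding oplus_def by (metis neg_imp imp_imp_one_one)

lemma oplus_zero: "oplus x zero = x"
  unfolding oplus_def by (metis imp_zero_right neg_neg)

lemma oplus_one_assoc:
  "oplus (oplus one x) (oplus y (oplus one z)) = oplus (oplus (oplus one x) y) (oplus one z)"
proof -
  have exchange: "oplus (neg (oplus one x)) (oplus (neg (oplus one z)) w)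
                = oplus (neg (oplus one z)) (oplus (neg (oplus one x)) w)" for w
  proof -
    have "oplus one x = imp (neg x) one" for x
      unfolding oplus_def by (rule imp_neg_commute)
    then show ?thesis
      unfolding oplus_def neg_neg by (simp add: imp_one_exchange)
  qed
  have "neg (oplus (oplus one x) (oplus y (oplus one z)))
      = oplus (neg (oplus one x)) (oplus (neg (oplus one z)) (neg y))"
    by (metis neg_oplus oplus_commute)
  also have "\<dots> = oplus (neg (oplus one z)) (oplus (neg (oplus one x)) (neg y))"
    by (rule exchange)
  also have "\<dots> = neg (oplus (oplus (oplus one x) y) (oplus one z))"
    by (metis neg_oplus oplus_commute)
  finally show ?thesis
    by (metis neg_neg)
qed

lemma oplus_decompose: "oplus x y = oplus (oplus (pos x) (pos y)) (oplus (ngt x) (ngt y))"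
proof -
  have "oplus x y = imp (imp (pos y) (ngt (neg x))) (imp (pos (neg x)) (ngt y))"
    unfolding oplus_def by (rule imp_pos_ngt)
  also have "\<dots> = oplus (oplus (pos x) (pos y)) (oplus (ngt x) (ngt y))"
    unfolding ngt_neg pos_neg oplus_def by (metis neg_imp neg_neg imp_neg_commute)
  finally show ?thesis .
qed

lemma pos_oplus_neg:
  "pos (oplus (neg x) (oplus x y)) = oplus (neg (pos x)) (oplus (pos x) (pos y))"
  unfolding oplus_def neg_neg by (rule pos_imp_neg)

lemma join_commute: "join x y = join y x"
  by (metis imp_join imp_zero_left)

lemma oplus_join: "oplus x (join y z) = join (oplus x y) (oplus x z)"
  unfolding oplus_def by (metis imp_join join_commute)

theorem mv_star_algebra: "mv_star_algebra UNIV oplus neg zero one"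
  unfolding mv_star_algebra_def mv_pos_oplus mv_ngt_oplus mv_join_oplus
  by (intro conjI ballI UNIV_I oplus_commute oplus_one_assoc oplus_neg_self oplus_one_one
      oplus_zero neg_oplus neg_neg oplus_decompose pos_oplus_neg join_commute join_assoc oplus_join)

end

lemma mv_star_algebra_hom_image:
  assumes mv: "mv_star_algebra A pl ng z o1"
    and hom_pl: "\<And>x y. x \<in> A \<Longrightarrow> y \<in> A \<Longrightarrow> h (pl x y) = pl' (h x) (h y)"
    and hom_ng: "\<And>x. x \<in> A \<Longrightarrow> h (ng x) = ng' (h x)"
  shows "mv_star_algebra (h ` A) pl' ng' (h z) (h o1)"
proof -
  have closed: "o1 \<in> A" "\<And>x y. x \<in> A \<Longrightarrow> y \<in> A \<Longrightarrow> pl x y \<in> A"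
      "\<And>x. x \<in> A \<Longrightarrow> ng x \<in> A"
    using mv unfolding mv_star_algebra_def by blast+
  have hom_pos: "h (mv_pos pl ng o1 x) = mv_pos pl' ng' (h o1) (h x)" if "x \<in> A" for x
    using that closed by (simp add: mv_pos_def hom_pl hom_ng)
  have hom_ngt: "h (mv_ngt pl ng o1 x) = mv_ngt pl' ng' (h o1) (h x)" if "x \<in> A" for x
    using that closed by (simp add: mv_ngt_def hom_pl hom_ng)
  have pos_in: "mv_pos pl ng o1 x \<in> A" "mv_ngt pl ng o1 x \<in> A" if "x \<in> A" for x
    using that closed by (simp_all add: mv_pos_def mv_ngt_def)
  have hom_join: "h (mv_join pl ng o1 x y) = mv_join pl' ng' (h o1) (h x) (h y)"
    if "x \<in> A" "y \<in> A" for x y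
    using that closed pos_in by (simp add: mv_join_def Let_def hom_pl hom_ng hom_pos hom_ngt)
  have join_in: "mv_join pl ng o1 x y \<in> A" if "x \<in> A" "y \<in> A" for x y
    using that closed pos_in by (simp add: mv_join_def Let_def)
  have z_in: "z \<in> A" using mv unfolding mv_star_algebra_def by blast
  note axioms = mv[unfolded mv_star_algebra_def, THEN conjunct2, THEN conjunct2,
      THEN conjunct2, THEN conjunct2, rule_format]
  \<comment> \<open>Pulling h outwards turns each identity on h ` A into h applied to one on A.\<close>
  show ?thesis
    using z_in closed pos_in join_in unfolding mv_star_algebra_def
    apply (clarsimp simp flip: hom_pl hom_ng hom_pos hom_ngt hom_join)
    subgoal for x y w using axioms[of x y w] by (intro conjI arg_cong[where f = h]) blast+
    done
qed

(* R1 followed by R2: modus ponens, available for implicational conclusions only. *)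
lemma derivable_mp:
  "derivable a \<Longrightarrow> derivable (Imp a (Imp b c)) \<Longrightarrow> derivable (Imp b c)"
  using R1[of a "Imp b c" One] R2 by blast

lemma derivable_refl: "derivable (Imp p p)"
  using R3[OF Q3a[of p One] Q3b[of One p]] R2 by blast

lemma derivable_trans: "derivable (Imp a b) \<Longrightarrow> derivable (Imp b c) \<Longrightarrow> derivable (Imp a c)"
  using R3[of a b b c] derivable_refl derivable_mp by blast

lemma derivable_Neg: "derivable (Imp a b) \<Longrightarrow> derivable (Imp (Neg b) (Neg a))"
  using derivable_mp[OF _ Q1a] by blast

lemma derivable_Pos_equiv: "derivable (Imp (Pos p) (Imp (Imp p One) One))"
    "derivable (Imp (Imp (Imp p One) One) (Pos p))"
  using derivable_trans[OF Q3a[of "Pos p" One] Q11a] derivable_trans[OF Q11b Q3b] .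

lemma derivable_Ngt_equiv: "derivable (Imp (Ngt p) (Imp (Imp p (Neg One)) (Neg One)))"
    "derivable (Imp (Imp (Imp p (Neg One)) (Neg One)) (Ngt p))"
  using derivable_trans[OF Q3a[of "Ngt p" One] Q11c] derivable_trans[OF Q11d Q3b] .

lemma derivable_Pos: "derivable (Imp a b) \<Longrightarrow> derivable (Imp (Pos a) (Pos b))"
  by (meson derivable_trans derivable_Pos_equiv R3 derivable_refl)

lemma derivable_Ngt: "derivable (Imp a b) \<Longrightarrow> derivable (Imp (Ngt a) (Ngt b))"
  by (meson derivable_trans derivable_Ngt_equiv R3 derivable_refl)

lemma derivable_Imp_self: "derivable (Imp (Imp a a) (Imp b b))"
  using derivable_mp[OF derivable_refl Q3a[of "Imp b b" a]] .

lemma equivp_fm_equiv: "equivp fm_equiv"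
  by (rule equivpI) (auto simp: reflp_def symp_def transp_def fm_equiv_def
      intro: derivable_refl derivable_trans)

quotient_type lind = fm / fm_equiv
  by (rule equivp_fm_equiv)

lift_definition lind_imp :: "lind \<Rightarrow> lind \<Rightarrow> lind" is Imp
  unfolding fm_equiv_def by (blast intro: R3)

lift_definition lind_neg :: "lind \<Rightarrow> lind" is Neg
  unfolding fm_equiv_def by (blast intro: derivable_Neg)

lift_definition lind_pos :: "lind \<Rightarrow> lind" is Pos
  unfolding fm_equiv_def by (blast intro: derivable_Pos)

lift_definition lind_ngt :: "lind \<Rightarrow> lind" is Ngt
  unfolding fm_equiv_def by (blast intro: derivable_Ngt)

lift_definition lind_one :: lind is One .

interpretation lind: ql_star_algebra lind_imp lind_neg lind_pos lind_ngt lind_one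
  by (unfold_locales; (unfold ql_join_def)?; transfer;
      auto simp: fm_equiv_def Q1a Q1b Q2a Q2b Q3a Q3b Q4a Q4b Q5a Q5b Q6a Q6b
        Q7a[unfolded Or_def] Q7b[unfolded Or_def] Q8a[unfolded Or_def] Q8b[unfolded Or_def] Q9 derivable_Imp_self derivable_Pos_equiv derivable_Ngt_equiv)

lemma cls_eq_iff: "cls a = cls b \<longleftrightarrow> fm_equiv a b"
proof -
  have "equiv UNIV equiv_rel"
    using equivp_fm_equiv by (simp add: equivp_equiv equiv_rel_def)
  from eq_equiv_class_iff[OF this UNIV_I UNIV_I] show ?thesis
    by (simp add: cls_def equiv_rel_def)
qed

lemma fm_equiv_rep_cls: "fm_equiv (rep (cls p)) p"
proof -
  have "p \<in> cls p"
    unfolding cls_def equiv_rel_def fm_equiv_def by (simp add: derivable_refl)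
  then have "rep (cls p) \<in> cls p"
    unfolding rep_def by (rule someI)
  then show ?thesis
    unfolding cls_def equiv_rel_def fm_equiv_def by blast
qed

lemma Lneg_cls: "Lneg (cls a) = cls (Neg a)"
  unfolding Lneg_def cls_eq_iff using fm_equiv_rep_cls lind_neg.rsp by (simp add: rel_fun_def)

lemma Lplus_cls: "Lplus (cls a) (cls b) = cls (Imp (Neg a) b)"
  unfolding Lplus_def cls_eq_iff using fm_equiv_rep_cls lind_imp.rsp lind_neg.rsp
  by (simp add: rel_fun_def)

lemma Lcarrier_eq_range_cls: "Lcarrier = range cls"
  unfolding Lcarrier_def quotient_def cls_def by blast

lift_definition lind_class :: "lind \<Rightarrow> fm set" is cls
  by (simp add: cls_eq_iff)

lemma range_lind_class: "range lind_class = Lcarrier"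
  unfolding Lcarrier_eq_range_cls by transfer (rule refl)

theorem proposition5p4:
  shows "mv_star_algebra Lcarrier Lplus Lneg Lzero Lone"
proof -
  have "mv_star_algebra (range lind_class) Lplus Lneg (lind_class lind.zero) (lind_class lind_one)"
  proof (rule mv_star_algebra_hom_image[OF lind.mv_star_algebra])
    show "lind_class (lind.oplus x y) = Lplus (lind_class x) (lind_class y)" for x y
      unfolding lind.oplus_def by transfer (simp add: Lplus_cls)
    show "lind_class (lind_neg x) = Lneg (lind_class x)" for x
      by transfer (simp add: Lneg_cls)
  qed
  moreover have "lind_class lind.zero = Lzero" "lind_class lind_one = Lone"
    unfolding lind.zero_def Lzero_def Lone_def by (transfer, rule refl)+
  ultimately show ?thesis
    by (simp add: range_lind_class)
qed

end
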